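(* Let $g\ge1$, $n=g+1$, $k\in\{1,\dots,g\}$, $\kappa_1,\dots,\kappa_n\in\mathbb C$ pairwise distinct and $\lambda_1,\dots,\lambda_g\in\mathbb C^*$. Let $\tilde A$ be the $k\times n$ matrix $\tilde A=V\cdot\mathrm{diag}(1,\lambda_1,\dots,\lambda_g)$, where $V_{ij}=\kappa_j^{\,i-1}$ ($i\in[k]$, $j\in[n]$). Then the matroid of $\tilde A$ is $\mathcal M_{\mathbf a,v_1}$ for every $\mathbf a\in[\mathbf k]$.
   Context: $B\in\mathbb Z^{g\times n}$ has $B_{i,1}=1$, $B_{i,i+1}=-1$, other entries $0$; $Q=BB^T$. $[\mathbf k]\subset\mathbb R^g$ is the set of vectors with entries in $\{-\tfrac{k}{g+1},\tfrac{g+1-k}{g+1}\}$ having $k$ or $k-1$ entries equal to $\tfrac{g+1-k}{g+1}$ (vertices of the Voronoi polytope of $Q$). For $\mathbf a\in[\mathbf k]$: $\mathcal D_{\mathbf a,Q}=\{\mathbf c\in\mathbb Z^g:\mathbf a^TQ\mathbf a=(\mathbf a-\mathbf c)^TQ(\mathbf a-\mathbf c)\}$; $\mathbf s_{\mathbf a}\in\{0,1\}^n$ has $j$-th entry $0$ if $(B^T\mathbf a)_j>0$ and $1$ if $(B^T\mathbf a)_j<0$; $\mathcal M_{\mathbf a,v_1}$ is the matroid on $[n]$ with bases $\{I,|I|=k:\exists\mathbf c\in\mathcal D_{\mathbf a,Q},\ (B^T\mathbf c+\mathbf s_{\mathbf a})_i=1\ \forall i\in I\}$. The matroid of a $k\times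 n$ matrix has as bases the $k$-subsets of columns with nonzero maximal minor. *)

theory Defs
  imports Complex_Main "Jordan_Normal_Form.Determinant" "Jordan_Normal_Form.DL_Submatrix"
begin

(* All vectors/matrices of the paper are 1-indexed; we model them as functions on nat
   and only ever look at indices in {1..g} resp. {1..n}, n = g+1. *)

definition Bmat :: "nat \<Rightarrow> nat \<Rightarrow> nat \<Rightarrow> int" where
  "Bmat g i j = (if 1 \<le> i \<and> i \<le> g \<and> 1 \<le> j \<and> j \<le> g + 1 then
       (if j = 1 then 1 else if j = i + 1 then -1 else 0) else 0)"

definition Qmat :: "nat \<Rightarrow> nat \<Rightarrow> nat \<Rightarrow> int" where
  "Qmat g i j = (\<Sum>l = 1..g+1. Bmat g i l * Bmat g j l)"

definition qform :: "nat \<Rightarrow> (nat \<Rightarrow> real) \<Rightarrow> real" where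
  "qform g x = (\<Sum>i = 1..g. \<Sum>j = 1..g. x i * of_int (Qmat g i j) * x j)"

definition BT :: "nat \<Rightarrow> (nat \<Rightarrow> real) \<Rightarrow> nat \<Rightarrow> real" where
  "BT g x j = (\<Sum>i = 1..g. of_int (Bmat g i j) * x i)"

definition kset :: "nat \<Rightarrow> nat \<Rightarrow> (nat \<Rightarrow> real) set" where
  "kset g k = {a. (\<forall>i. i \<notin> {1..g} \<longrightarrow> a i = 0)
      \<and> (\<forall>i\<in>{1..g}. a i = - real k / real (g + 1) \<or> a i = real (g + 1 - k) / real (g + 1))
      \<and> card {i\<in>{1..g}. a i = real (g + 1 - k) / real (g + 1)} \<in> {k, k - 1}}"

definition Dset :: "nat \<Rightarrow> (nat \<Rightarrow> real) \<Rightarrow> (nat \<Rightarrow> int) set" where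
  "Dset g a = {c. (\<forall>i. i \<notin> {1..g} \<longrightarrow> c i = 0)
      \<and> qform g a = qform g (\<lambda>i. a i - of_int (c i))}"

(* s_a in {0,1}^n; (B^T a)_j is never 0 for a in [k] *)
definition svec :: "nat \<Rightarrow> (nat \<Rightarrow> real) \<Rightarrow> nat \<Rightarrow> real" where
  "svec g a j = (if BT g a j > 0 then 0 else 1)"

definition Mbases :: "nat \<Rightarrow> nat \<Rightarrow> (nat \<Rightarrow> real) \<Rightarrow> nat set set" where
  "Mbases g k a = {I. I \<subseteq> {1..g+1} \<and> card I = k \<and>
      (\<exists>c\<in>Dset g a. \<forall>i\<in>I. BT g (\<lambda>l. of_int (c l)) i + svec g a i = 1)}"

(* bases of the matroid of a k x n matrix, ground set [n] = {1..n}
   (column j of the paper is column j-1 of the 0-indexed JNF matrix) *)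
definition matrix_bases :: "'a::comm_ring_1 mat \<Rightarrow> nat set set" where
  "matrix_bases A = {I. I \<subseteq> {1..dim_col A} \<and> card I = dim_row A \<and>
      det (submatrix A UNIV ((\<lambda>j. j - 1) ` I)) \<noteq> 0}"

definition Atilde :: "nat \<Rightarrow> nat \<Rightarrow> (nat \<Rightarrow> complex) \<Rightarrow> (nat \<Rightarrow> complex) \<Rightarrow> complex mat" where
  "Atilde g k \<kappa> lam = mat k (g + 1)
     (\<lambda>(i, j). \<kappa> (j + 1) ^ i * (if j = 0 then 1 else lam j))"

end

theory Submission
  imports Defs "HOL-Computational_Algebra.Polynomial"
begin

(* Both matroids are the uniform matroid U(k, n).
   For the matrix: a k x k minor of Atilde is a Vandermonde determinant in k distinct nodes
   with nonzero column scalings, hence nonzero.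
   For M(a, v1): (B^T x)_1 = x_1 + ... + x_g and (B^T x)_(j+1) = -x_j, so x^T Q x = |B^T x|^2 and
   B^T maps Z^g onto the integer vectors of coordinate sum 0. A vertex a of [k] satisfies
   B^T a = alpha (1,...,1) - 1_N with alpha = k/n and |N| = k, and then s_a = 1_N. For any k-set I, the
   integer vector c with B^T c = 1_I - 1_N gives B^T (a - c) = alpha (1,...,1) - 1_I, whose norm depends only
   on |I| = |N|; so c lies in D(a,Q) and B^T c + s_a = 1_I. *)

definition uniform_bases :: "nat \<Rightarrow> nat \<Rightarrow> nat set set" where
  "uniform_bases n k = {I. I \<subseteq> {1..n} \<and> card I = k}"

lemma det_scaled_vandermonde_nonzero:
  fixes x d :: "nat \<Rightarrow> 'a :: idom"
  assumes inj: "inj_on x {..<k}" and d: "\<And>j. j < k \<Longrightarrow> d j \<noteq> 0"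
  shows "det (mat k k (\<lambda>(i, j). x j ^ i * d j)) \<noteq> 0"
proof
  let ?M = "mat k k (\<lambda>(i, j). x j ^ i * d j)"
  assume "det ?M = 0"
  then have "det (transpose_mat ?M) = 0"
    by (subst det_transpose) auto
  then obtain v where v: "v \<in> carrier_vec k" "v \<noteq> 0\<^sub>v k" "transpose_mat ?M *\<^sub>v v = 0\<^sub>v k"
    using det_0_iff_vec_prod_zero[of "transpose_mat ?M" k] by auto
  define p where "p = (\<Sum>i<k. monom (v $ i) i)"
  have coeff_p: "coeff p i = (if i < k then v $ i else 0)" for i
    unfolding p_def by (simp add: coeff_sum)
  have "k > 0"
    using v(1,2) by (auto intro!: eq_vecI)
  then have "degree p < k"
    using coeff_p degree_le[of "k - 1" p] by fastforce
  moreover have "poly p (x j) = 0" if "j < k" for j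
  proof -
    have "d j * poly p (x j) = (\<Sum>i<k. x j ^ i * d j * v $ i)"
      by (simp add: p_def poly_sum poly_monom sum_distrib_left algebra_simps)
    also have "\<dots> = (transpose_mat ?M *\<^sub>v v) $ j"
      using that v(1) by (simp add: mult_mat_vec_def scalar_prod_def row_def atLeast0LessThan)
    also have "\<dots> = 0"
      using v(3) that by simp
    finally show ?thesis
      using d that by simp
  qed
  ultimately have "p = 0"
    using \<open>k > 0\<close> card_image[OF inj] by (intro poly_eqI_degree[of "x ` {..<k}"]) auto
  then have "v $ i = 0" if "i < k" for i
    using coeff_p[of i] that by simp
  then have "v = 0\<^sub>v k"
    using v(1) by (intro eq_vecI) auto
  with v(2) show False ..
qed

lemma submatrix_mat_columns:
  assumes "J \<subseteq> {..<c}"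
  shows "submatrix (mat r c f) UNIV J = mat r (card J) (\<lambda>(i, j). f (i, pick J j))"
proof -
  have cols: "{j. j < c \<and> j \<in> J} = J"
    using assms by auto
  have "pick J j < c" if "j < card J" for j
    using pick_in_set_le[OF that] assms by auto
  then show ?thesis
    by (intro eq_matI) (auto simp: submatrix_index dim_submatrix cols pick_UNIV)
qed

lemma matrix_bases_Atilde:
  assumes "inj_on \<kappa> {1..g+1}" and "\<forall>i\<in>{1..g}. lam i \<noteq> 0"
  shows "matrix_bases (Atilde g k \<kappa> lam) = uniform_bases (g + 1) k"
proof -
  have "det (submatrix (Atilde g k \<kappa> lam) UNIV ((\<lambda>j. j - 1) ` I)) \<noteq> 0"
    if I: "I \<subseteq> {1..g+1}" "card I = k" for I
  proof -
    define J where "J = (\<lambda>j. j - 1) ` I"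
    have J: "J \<subseteq> {..<g+1}"
      using I(1) unfolding J_def by force
    have "inj_on (\<lambda>j. j - 1) I"
      using I(1) by (intro inj_on_diff_nat) auto
    then have card_J: "card J = k"
      using I(2) card_image unfolding J_def by blast
    then have pick_J: "pick J j \<in> J" if "j < k" for j
      using pick_in_set_le that by blast
    have "inj_on (pick J) {..<k}"
      using card_J pick_mono_le by (intro strict_mono_on_imp_inj_on) (auto simp: strict_mono_on_def)
    then have "inj_on (\<lambda>j. pick J j + 1) {..<k}"
      by (simp add: inj_on_def)
    moreover have "(\<lambda>j. pick J j + 1) ` {..<k} \<subseteq> {1..g+1}"
      using pick_J J by force
    ultimately have "inj_on (\<lambda>j. \<kappa> (pick J j + 1)) {..<k}"
      using comp_inj_on[OF _ inj_on_subset[OF assms(1)]] by (auto simp: o_def)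
    moreover have "(if pick J j = 0 then 1 else lam (pick J j)) \<noteq> 0" if "j < k" for j
      using assms(2) pick_J[OF that] J by auto
    ultimately have "det (mat k k (\<lambda>(i, j). \<kappa> (pick J j + 1) ^ i *
        (if pick J j = 0 then 1 else lam (pick J j)))) \<noteq> 0"
      by (rule det_scaled_vandermonde_nonzero)
    then show ?thesis
      unfolding Atilde_def J_def[symmetric] submatrix_mat_columns[OF J] card_J by simp
  qed
  moreover have "dim_row (Atilde g k \<kappa> lam) = k" "dim_col (Atilde g k \<kappa> lam) = g + 1"
    unfolding Atilde_def by simp_all
  ultimately show ?thesis
    unfolding matrix_bases_def uniform_bases_def by auto
qed

lemma atLeast1_atMost_Suc_cases:
  assumes "j \<in> {1..g+1}"
  obtains "j = 1" | i where "j = Suc i" "i \<in> {1..g}"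
proof (cases "j = 1")
  case False
  with assms show thesis
    by (intro that(2)[of "j - 1"]) auto
qed (rule that(1))

lemma BT_one: "BT g x 1 = (\<Sum>i = 1..g. x i)"
  unfolding BT_def Bmat_def by (intro sum.cong) auto

lemma BT_Suc:
  assumes "j \<in> {1..g}"
  shows "BT g x (Suc j) = - x j"
proof -
  have "BT g x (Suc j) = (\<Sum>i = 1..g. if i = j then - x i else 0)"
    unfolding BT_def Bmat_def using assms by (intro sum.cong) auto
  also have "\<dots> = - x j"
    using assms by simp
  finally show ?thesis .
qed

lemma BT_diff: "BT g (\<lambda>i. x i - y i) j = BT g x j - BT g y j"
  unfolding BT_def by (simp add: algebra_simps sum_subtractf)

lemma qform_eq_sum_BT_squares: "qform g x = (\<Sum>l = 1..g+1. (BT g x l)\<^sup>2)"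
proof -
  have "qform g x = (\<Sum>i = 1..g. \<Sum>j = 1..g. \<Sum>l = 1..g+1.
      (of_int (Bmat g i l) * x i) * (of_int (Bmat g j l) * x j))"
    unfolding qform_def Qmat_def by (simp add: sum_distrib_left sum_distrib_right algebra_simps)
  also have "\<dots> = (\<Sum>i = 1..g. \<Sum>l = 1..g+1. \<Sum>j = 1..g.
      (of_int (Bmat g i l) * x i) * (of_int (Bmat g j l) * x j))"
    by (intro sum.cong refl sum.swap)
  also have "\<dots> = (\<Sum>l = 1..g+1. \<Sum>i = 1..g. \<Sum>j = 1..g.
      (of_int (Bmat g i l) * x i) * (of_int (Bmat g j l) * x j))"
    by (rule sum.swap)
  also have "\<dots> = (\<Sum>l = 1..g+1. (BT g x l)\<^sup>2)"
    unfolding BT_def power2_eq_square sum_product ..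
  finally show ?thesis .
qed

lemma BT_onto_zero_sum:
  fixes z :: "nat \<Rightarrow> int"
  assumes "(\<Sum>j = 1..g+1. z j) = 0"
  obtains c where "\<forall>i. i \<notin> {1..g} \<longrightarrow> c i = 0"
    and "\<forall>j\<in>{1..g+1}. BT g (\<lambda>i. of_int (c i)) j = of_int (z j)"
proof
  define c where "c i = (if i \<in> {1..g} then - z (Suc i) else 0)" for i
  show "\<forall>i. i \<notin> {1..g} \<longrightarrow> c i = 0"
    unfolding c_def by simp
  have "z 1 + (\<Sum>i = 1..g. z (Suc i)) = 0"
    using assms sum.atLeast_Suc_atMost[of 1 "g + 1" z] sum.shift_bounds_cl_Suc_ivl[of z 1 g] by simp
  then have "BT g (\<lambda>i. of_int (c i)) 1 = of_int (z 1)"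
    unfolding BT_one c_def by (simp add: sum_negf eq_neg_iff_add_eq_0 flip: of_int_sum)
  moreover have "BT g (\<lambda>i. of_int (c i)) (Suc i) = of_int (z (Suc i))" if "i \<in> {1..g}" for i
    using that by (simp add: BT_Suc c_def)
  ultimately show "\<forall>j\<in>{1..g+1}. BT g (\<lambda>i. of_int (c i)) j = of_int (z j)"
    by (metis atLeast1_atMost_Suc_cases)
qed

lemma sum_of_bool_subset:
  assumes "finite A" "S \<subseteq> A"
  shows "(\<Sum>j\<in>A. of_bool (j \<in> S)) = of_nat (card S)"
  using assms by (simp add: Int_absorb1)

lemma sum_square_diff_indicator:
  fixes \<alpha> :: real
  assumes "S \<subseteq> {1..n}"
  shows "(\<Sum>j = 1..n. (\<alpha> - of_bool (j \<in> S))\<^sup>2) = real n * \<alpha>\<^sup>2 - 2 * \<alpha> * real (card S) + real (card S)"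
proof -
  have "(\<Sum>j = 1..n. (\<alpha> - of_bool (j \<in> S))\<^sup>2)
      = (\<Sum>j = 1..n. \<alpha>\<^sup>2 - 2 * \<alpha> * of_bool (j \<in> S) + of_bool (j \<in> S))"
    by (intro sum.cong) (simp_all add: power2_eq_square algebra_simps)
  also have "\<dots> = real n * \<alpha>\<^sup>2 - 2 * \<alpha> * real (card S) + real (card S)"
    unfolding sum.distrib sum_subtractf sum_distrib_left[symmetric]
      sum_of_bool_subset[OF finite_atLeastAtMost assms] by simp
  finally show ?thesis .
qed

lemma BT_of_kset:
  assumes "1 \<le> k" "k \<le> g" "a \<in> kset g k"
  obtains N where "N \<subseteq> {1..g+1}" "card N = k"
    "\<forall>j\<in>{1..g+1}. BT g a j = real k / real (g + 1) - of_bool (j \<in> N)"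
proof -
  define \<alpha> where "\<alpha> = real k / real (g + 1)"
  define P where "P = {i\<in>{1..g}. a i = 1 - \<alpha>}"
  have "real (g + 1 - k) / real (g + 1) = 1 - \<alpha>"
    unfolding \<alpha>_def using assms(2) by (simp add: of_nat_diff field_simps)
  then have "\<forall>i\<in>{1..g}. a i = - \<alpha> \<or> a i = 1 - \<alpha>" and card_P: "card P = k \<or> card P = k - 1"
    using assms(3) unfolding kset_def P_def \<alpha>_def by auto
  then have a_eq: "a i = of_bool (i \<in> P) - \<alpha>" if "i \<in> {1..g}" for i
    using that unfolding P_def by auto
  have P: "P \<subseteq> {1..g}" "finite P" "0 \<notin> P"
    unfolding P_def by auto
  define N where "N = (if card P = k then {} else {1}) \<union> Suc ` P"
  have "N \<subseteq> {1..g+1}"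
    using P unfolding N_def by auto
  moreover have "card N = k"
    using card_P assms(1) P unfolding N_def by (auto simp: card_image card_insert_if)
  moreover have "BT g a 1 = \<alpha> - of_bool (1 \<in> N)"
  proof -
    have "BT g a 1 = real (card P) - real g * \<alpha>"
      unfolding BT_one using P by (simp add: a_eq sum_subtractf Int_absorb1)
    also have "\<dots> = \<alpha> - (real k - real (card P))"
      unfolding \<alpha>_def by (simp add: field_simps)
    also have "\<dots> = \<alpha> - of_bool (1 \<in> N)"
      using card_P assms(1) P(3) unfolding N_def by auto
    finally show ?thesis .
  qed
  moreover have "BT g a (Suc i) = \<alpha> - of_bool (Suc i \<in> N)" if "i \<in> {1..g}" for i
    using that by (auto simp: BT_Suc a_eq N_def image_iff)
  ultimately show thesis
    using that unfolding \<alpha>_def by (metis atLeast1_atMost_Suc_cases)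
qed

lemma Mbases_eq_uniform_bases:
  assumes "1 \<le> k" "k \<le> g" "a \<in> kset g k"
  shows "Mbases g k a = uniform_bases (g + 1) k"
proof -
  define \<alpha> where "\<alpha> = real k / real (g + 1)"
  obtain N where N: "N \<subseteq> {1..g+1}" "card N = k"
    and BT_a: "\<forall>j\<in>{1..g+1}. BT g a j = \<alpha> - of_bool (j \<in> N)"
    using BT_of_kset[OF assms] unfolding \<alpha>_def by blast
  have "0 < \<alpha>" "\<alpha> < 1"
    unfolding \<alpha>_def using assms(1,2) by auto
  then have svec_a: "svec g a j = of_bool (j \<in> N)" if "j \<in> {1..g+1}" for j
    using BT_a that unfolding svec_def by auto
  have "I \<in> Mbases g k a" if I: "I \<subseteq> {1..g+1}" "card I = k" for I
  proof -
    have "(\<Sum>j = 1..g+1. of_bool (j \<in> I) - of_bool (j \<in> N) :: int) = 0"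
      unfolding sum_subtractf sum_of_bool_subset[OF finite_atLeastAtMost I(1)]
        sum_of_bool_subset[OF finite_atLeastAtMost N(1)] using I(2) N(2) by simp
    then obtain c where c: "\<forall>i. i \<notin> {1..g} \<longrightarrow> c i = 0"
      and BT_c: "\<forall>j\<in>{1..g+1}. BT g (\<lambda>i. of_int (c i)) j = of_bool (j \<in> I) - of_bool (j \<in> N)"
      by (rule BT_onto_zero_sum) simp
    have "qform g (\<lambda>i. a i - of_int (c i)) = (\<Sum>j = 1..g+1. (\<alpha> - of_bool (j \<in> I))\<^sup>2)"
      unfolding qform_eq_sum_BT_squares BT_diff by (intro sum.cong) (simp_all add: BT_a BT_c)
    also have "\<dots> = (\<Sum>j = 1..g+1. (\<alpha> - of_bool (j \<in> N))\<^sup>2)"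
      unfolding sum_square_diff_indicator[OF I(1)] sum_square_diff_indicator[OF N(1)] I(2) N(2) ..
    also have "\<dots> = qform g a"
      unfolding qform_eq_sum_BT_squares by (intro sum.cong) (simp_all add: BT_a)
    finally have "c \<in> Dset g a"
      using c unfolding Dset_def by simp
    moreover have "\<forall>j\<in>I. BT g (\<lambda>i. of_int (c i)) j + svec g a j = 1"
      using I BT_c svec_a by auto
    ultimately show ?thesis
      using I unfolding Mbases_def by blast
  qed
  then show ?thesis
    unfolding Mbases_def uniform_bases_def by blast
qed

theorem proposition5p6:
  fixes g k :: nat and \<kappa> lam :: "nat \<Rightarrow> complex" and a :: "nat \<Rightarrow> real"
  assumes "g \<ge> 1" and "1 \<le> k" and "k \<le> g"
    and "inj_on \<kappa> {1..g+1}"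
    and "\<forall>i\<in>{1..g}. lam i \<noteq> 0"
    and "a \<in> kset g k"
  shows "matrix_bases (Atilde g k \<kappa> lam) = Mbases g k a"
  using matrix_bases_Atilde[OF assms(4,5)] Mbases_eq_uniform_bases[OF assms(2,3,6)] by simp

end
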